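(* For positive integers $n$, $k$ and $r$, \[S_{\leq m}(n,k,r)=\sum_{i=r}^{n}{n\choose i}{i\brace r}_{\leq m}{n-i\brace k-1}_{\leq m}(k-1)!\text{.}\]
   Context: $S_{\leq m}(n,k,r)$ (mixed restricted Stirling number of the second kind) is the number of ways to distribute the elements of $[n]$ into non-empty cells, where there are $r$ cells carrying the label $1$ (indistinguishable among themselves) and one cell each with labels $2,\dots,k$, such that every cell contains at most $m$ elements. ${n\brace k}_{\leq m}$ is the number of partitions of $[n]$ into $k$ non-empty blocks each of size at most $m$. *)

theory Defs
  imports Main "HOL-Library.Disjoint_Sets" "HOL-Library.FuncSet"
begin

definition stirling2_le :: "nat \<Rightarrow> nat \<Rightarrow> nat \<Rightarrow> nat" where
  "stirling2_le m n k =
     card {P. partition_on {1..n} P \<and> card P = k \<and> (\<forall>B\<in>P. card B \<le> m)}"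

text \<open>Mixed restricted Stirling number S_{<=m}(n,k,r): distributions of [n] into non-empty
  cells, r of them carrying label 1 (indistinguishable among themselves, modelled as an
  unordered set P of cells) and one cell g i for each label i in {2..k}; all cells pairwise
  disjoint, covering [n], each of size at most m.\<close>
definition mixed_stirling_le :: "nat \<Rightarrow> nat \<Rightarrow> nat \<Rightarrow> nat \<Rightarrow> nat" where
  "mixed_stirling_le m n k r =
     card {(P, g). g \<in> {2..k} \<rightarrow>\<^sub>E Pow {1..n} \<and>
                   partition_on {1..n} (P \<union> g ` {2..k}) \<and>
                   P \<inter> g ` {2..k} = {} \<and> inj_on g {2..k} \<and>
                   card P = r \<and>
                   (\<forall>B \<in> P \<union> g ` {2..k}. card B \<le> m)}"

end

theory Submission
  imports Defs
begin

text \<open>Classify a distribution by the set \<open>S\<close> of elements lying in the cells labelled 1.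
  These cells form a bounded partition of \<open>S\<close> into \<open>r\<close> blocks; the other cells form a bounded
  partition of the complement into \<open>k - 1\<close> blocks together with one of the \<open>(k - 1)!\<close> bijections
  labelling its blocks by \<open>{2..k}\<close>. Summing over \<open>S\<close> by its size \<open>i\<close> gives the formula, in which
  the terms with \<open>i < r\<close> vanish.\<close>

definition bounded_partitions :: "nat \<Rightarrow> 'a set \<Rightarrow> nat \<Rightarrow> 'a set set set" where
  "bounded_partitions m A k = {P. partition_on A P \<and> card P = k \<and> (\<forall>B\<in>P. card B \<le> m)}"

definition labelled_bounded_partitions :: "nat \<Rightarrow> 'a set \<Rightarrow> 'b set \<Rightarrow> ('b \<Rightarrow> 'a set) set" where
  "labelled_bounded_partitions m A K =
     {g \<in> K \<rightarrow>\<^sub>E Pow A. partition_on A (g ` K) \<and> inj_on g K \<and> (\<forall>B\<in>g ` K. card B \<le> m)}"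

definition mixed_bounded_partitions ::
    "nat \<Rightarrow> 'a set \<Rightarrow> 'b set \<Rightarrow> nat \<Rightarrow> ('a set set \<times> ('b \<Rightarrow> 'a set)) set" where
  "mixed_bounded_partitions m N K r =
     {(P, g). g \<in> K \<rightarrow>\<^sub>E Pow N \<and> partition_on N (P \<union> g ` K) \<and> P \<inter> g ` K = {} \<and>
              inj_on g K \<and> card P = r \<and> (\<forall>B \<in> P \<union> g ` K. card B \<le> m)}"

lemma mixed_stirling_le_eq_card:
  "mixed_stirling_le m n k r = card (mixed_bounded_partitions m {1..n} {2..k} r)"
  by (simp add: mixed_stirling_le_def mixed_bounded_partitions_def)

lemma finite_bounded_partitions: "finite A \<Longrightarrow> finite (bounded_partitions m A k)"
  by (rule finite_subset[OF _ finitely_many_partition_on[of A]])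
    (auto simp: bounded_partitions_def)

lemma card_partition_on_le:
  assumes "finite A" "partition_on A P"
  shows "card P \<le> card A"
proof -
  have fin: "\<And>p. p \<in> P \<Longrightarrow> finite p"
    using assms partition_onD1[OF assms(2)] by (auto intro: finite_subset)
  have "card P = (\<Sum>p\<in>P. 1)" by simp
  also have "\<dots> \<le> (\<Sum>p\<in>P. card p)"
    using fin partition_onD3[OF assms(2)] by (intro sum_mono) (metis One_nat_def Suc_leI card_gt_0_iff)
  also have "\<dots> = card A" by (rule product_partition[OF assms(2) fin, symmetric])
  finally show ?thesis .
qed

lemma stirling2_le_eq_0:
  assumes "n < k"
  shows "stirling2_le m n k = 0"
proof -
  have "{P. partition_on {1..n} P \<and> card P = k \<and> (\<forall>B\<in>P. card B \<le> m)} = {}"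
    using card_partition_on_le[of "{1..n}"] assms by fastforce
  then show ?thesis unfolding stirling2_le_def by (metis card.empty)
qed

lemma inj_image_in_bounded_partitions:
  assumes f: "inj_on f A" and P: "P \<in> bounded_partitions m A k"
  shows "(`) f ` P \<in> bounded_partitions m (f ` A) k"
proof -
  have part: "partition_on A P" and card_P: "card P = k" and small: "\<forall>B\<in>P. card B \<le> m"
    using P by (auto simp: bounded_partitions_def)
  have sub: "P \<subseteq> Pow A" using partition_onD1[OF part] by auto
  have "(`) f ` P - {{}} = (`) f ` P"
    using partition_onD3[OF part] by auto
  then have "partition_on (f ` A) ((`) f ` P)"
    using partition_on_inj_image[OF part f] by simp
  moreover have "inj_on ((`) f) P"
    using inj_on_subset[OF inj_on_image_Pow[OF f] sub] .
  then have "card ((`) f ` P) = k" using card_P by (simp add: card_image)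
  moreover have "card (f ` B) \<le> m" if "B \<in> P" for B
    using that sub small inj_on_subset[OF f] by (auto simp: card_image)
  ultimately show ?thesis by (auto simp: bounded_partitions_def)
qed

lemma card_bounded_partitions_le_inj_image:
  assumes "finite A" "inj_on f A"
  shows "card (bounded_partitions m A k) \<le> card (bounded_partitions m (f ` A) k)"
proof (rule card_inj_on_le)
  have "bounded_partitions m A k \<subseteq> Pow (Pow A)"
    by (auto simp: bounded_partitions_def dest: partition_onD1)
  then show "inj_on ((`) ((`) f)) (bounded_partitions m A k)"
    by (rule inj_on_subset[OF inj_on_image_Pow[OF inj_on_image_Pow[OF assms(2)]]])
  show "finite (bounded_partitions m (f ` A) k)"
    using assms(1) by (simp add: finite_bounded_partitions)
qed (use inj_image_in_bounded_partitions[OF assms(2)] in auto)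

lemma card_bounded_partitions:
  assumes "finite A"
  shows "card (bounded_partitions m A k) = stirling2_le m (card A) k"
proof -
  obtain f where f: "bij_betw f A {1..card A}"
    using assms finite_same_card_bij[of A "{1..card A}"] by auto
  have "card (bounded_partitions m A k) = card (bounded_partitions m {1..card A} k)"
  proof (rule antisym)
    show "card (bounded_partitions m A k) \<le> card (bounded_partitions m {1..card A} k)"
      using card_bounded_partitions_le_inj_image[OF assms bij_betw_imp_inj_on[OF f]]
        bij_betw_imp_surj_on[OF f] by simp
    have "bij_betw (inv_into A f) {1..card A} A" by (rule bij_betw_inv_into[OF f])
    then show "card (bounded_partitions m {1..card A} k) \<le> card (bounded_partitions m A k)"
      using card_bounded_partitions_le_inj_image[of "{1..card A}" "inv_into A f"]
      by (simp add: bij_betw_def)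
  qed
  then show ?thesis by (simp add: stirling2_le_def bounded_partitions_def)
qed

lemma inj_funcset_image_eq:
  assumes "g \<in> K \<rightarrow> Q" "inj_on g K" "finite Q" "card Q = card K"
  shows "g ` K = Q"
  using assms by (metis card_image card_subset_eq funcset_image)

lemma card_inj_funcset_eq_fact:
  assumes "finite K" "finite Q" "card Q = card K"
  shows "card {g \<in> K \<rightarrow>\<^sub>E Q. inj_on g K} = fact (card K)"
proof -
  have "card {g \<in> K \<rightarrow>\<^sub>E Q. inj_on g K} = (\<Prod>i = 0..<card K. card K - i)"
    using card_inj_on_subset_funcset[OF assms(1,2) subset_refl] assms(3) by simp
  also have "\<dots> = fact (card K)" using fact_prod_rev[where 'a = nat] by simp
  finally show ?thesis .
qed

lemma labelled_bounded_partitions_eq_UN: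
  assumes "finite A"
  shows "labelled_bounded_partitions m A K =
           (\<Union>Q\<in>bounded_partitions m A (card K). {g \<in> K \<rightarrow>\<^sub>E Q. inj_on g K})"
proof (intro set_eqI iffI)
  fix g assume "g \<in> labelled_bounded_partitions m A K"
  then have "g ` K \<in> bounded_partitions m A (card K)" "g \<in> K \<rightarrow>\<^sub>E g ` K" "inj_on g K"
    by (auto simp: labelled_bounded_partitions_def bounded_partitions_def card_image PiE_def)
  then show "g \<in> (\<Union>Q\<in>bounded_partitions m A (card K). {g \<in> K \<rightarrow>\<^sub>E Q. inj_on g K})" by blast
next
  fix g assume "g \<in> (\<Union>Q\<in>bounded_partitions m A (card K). {g \<in> K \<rightarrow>\<^sub>E Q. inj_on g K})"
  then obtain Q where Q: "Q \<in> bounded_partitions m A (card K)" "g \<in> K \<rightarrow>\<^sub>E Q" "inj_on g K"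
    by blast
  then have part: "partition_on A Q" and card_Q: "card Q = card K"
    by (auto simp: bounded_partitions_def)
  have "g \<in> K \<rightarrow> Q" using Q(2) by (auto simp: PiE_iff)
  then have "g ` K = Q"
    using inj_funcset_image_eq Q(3) finite_elements[OF assms part] card_Q by blast
  moreover have "Q \<subseteq> Pow A" using partition_onD1[OF part] by auto
  ultimately show "g \<in> labelled_bounded_partitions m A K"
    using Q by (auto simp: labelled_bounded_partitions_def bounded_partitions_def)
qed

lemma finite_labelled_bounded_partitions:
  "finite A \<Longrightarrow> finite K \<Longrightarrow> finite (labelled_bounded_partitions m A K)"
  by (rule finite_subset[of _ "K \<rightarrow>\<^sub>E Pow A"])
    (auto simp: labelled_bounded_partitions_def intro: finite_PiE)

lemma card_labelled_bounded_partitions: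
  assumes "finite A" "finite K"
  shows "card (labelled_bounded_partitions m A K) =
           card (bounded_partitions m A (card K)) * fact (card K)"
proof -
  have fin_blocks: "finite Q" and card_Q: "card Q = card K"
    if "Q \<in> bounded_partitions m A (card K)" for Q
    using that finite_elements[OF assms(1)] by (auto simp: bounded_partitions_def)
  have "card (labelled_bounded_partitions m A K) =
          (\<Sum>Q\<in>bounded_partitions m A (card K). card {g \<in> K \<rightarrow>\<^sub>E Q. inj_on g K})"
    unfolding labelled_bounded_partitions_eq_UN[OF assms(1)]
  proof (rule card_UN_disjoint)
    show "\<forall>Q\<in>bounded_partitions m A (card K). finite {g \<in> K \<rightarrow>\<^sub>E Q. inj_on g K}"
    proof
      fix Q assume "Q \<in> bounded_partitions m A (card K)"
      then have "finite (K \<rightarrow>\<^sub>E Q)" using fin_blocks assms(2) by (simp add: finite_PiE)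
      then show "finite {g \<in> K \<rightarrow>\<^sub>E Q. inj_on g K}" by simp
    qed
    have "g ` K = Q" if "Q \<in> bounded_partitions m A (card K)" "g \<in> K \<rightarrow>\<^sub>E Q" "inj_on g K" for g Q
      using inj_funcset_image_eq[of g K Q] that fin_blocks card_Q by (auto simp: PiE_iff)
    then show "\<forall>Q\<in>bounded_partitions m A (card K). \<forall>Q'\<in>bounded_partitions m A (card K). Q \<noteq> Q' \<longrightarrow>
            {g \<in> K \<rightarrow>\<^sub>E Q. inj_on g K} \<inter> {g \<in> K \<rightarrow>\<^sub>E Q'. inj_on g K} = {}"
      by blast
  qed (simp add: finite_bounded_partitions assms(1))
  also have "\<dots> = (\<Sum>Q\<in>bounded_partitions m A (card K). fact (card K))"
    using card_inj_funcset_eq_fact[OF assms(2)] fin_blocks card_Q by (intro sum.cong) auto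
  finally show ?thesis by simp
qed

lemma partition_on_Un_disjoint_iff:
  "partition_on N (P \<union> Q) \<and> P \<inter> Q = {} \<longleftrightarrow>
     (\<exists>S\<subseteq>N. partition_on S P \<and> partition_on (N - S) Q)"
proof
  assume part: "partition_on N (P \<union> Q) \<and> P \<inter> Q = {}"
  then have N: "N = \<Union>P \<union> \<Union>Q" and dis: "disjoint (P \<union> Q)" and ne: "{} \<notin> P \<union> Q"
    by (auto simp: partition_on_def)
  have "disjnt p q" if "p \<in> P" "q \<in> Q" for p q
    using that part pairwiseD[OF dis, of p q] by blast
  then have "\<Union>P \<inter> \<Union>Q = {}" by (auto simp: disjnt_def)
  then have "partition_on (\<Union>P) P" "partition_on (N - \<Union>P) Q"
    using N ne pairwise_subset[OF dis] unfolding partition_on_def by auto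
  then show "\<exists>S\<subseteq>N. partition_on S P \<and> partition_on (N - S) Q"
    using N by blast
next
  assume "\<exists>S\<subseteq>N. partition_on S P \<and> partition_on (N - S) Q"
  then obtain S where "S \<subseteq> N" and P: "partition_on S P" and Q: "partition_on (N - S) Q"
    by blast
  then have U: "\<Union>P = S" "\<Union>Q = N - S" and ne: "{} \<notin> P" "{} \<notin> Q"
    by (auto simp: partition_on_def)
  have "partition_on N (P \<union> Q)"
    unfolding partition_on_def
    using \<open>S \<subseteq> N\<close> U ne disjoint_union[OF partition_onD2[OF P] partition_onD2[OF Q]] by auto
  moreover have "P \<inter> Q = {}"
  proof (intro equalityI subsetI)
    fix B assume "B \<in> P \<inter> Q"
    then have "B \<subseteq> S" "B \<subseteq> N - S" "B \<noteq> {}" using U ne by blast+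
    then show "B \<in> {}" by blast
  qed simp
  ultimately show "partition_on N (P \<union> Q) \<and> P \<inter> Q = {}" ..
qed

lemma mixed_bounded_partitions_eq_UN:
  "mixed_bounded_partitions m N K r =
     (\<Union>S\<in>Pow N. bounded_partitions m S r \<times> labelled_bounded_partitions m (N - S) K)"
proof -
  have funcset: "g \<in> K \<rightarrow>\<^sub>E Pow N \<longleftrightarrow> g \<in> K \<rightarrow>\<^sub>E Pow (N - S)"
    if "S \<subseteq> N" "partition_on (N - S) (g ` K)" for g :: "'b \<Rightarrow> 'a set" and S
    using that partition_onD1[OF that(2)] by (auto simp: PiE_iff)
  have split_blocks: "(P, g) \<in> mixed_bounded_partitions m N K r \<longleftrightarrow>
          (\<exists>S\<subseteq>N. partition_on S P \<and> partition_on (N - S) (g ` K)) \<and> g \<in> K \<rightarrow>\<^sub>E Pow N \<and>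
          inj_on g K \<and> card P = r \<and> (\<forall>B \<in> P \<union> g ` K. card B \<le> m)" for P g
    unfolding mixed_bounded_partitions_def partition_on_Un_disjoint_iff[symmetric] by auto
  have regroup: "(\<exists>S\<subseteq>N. partition_on S P \<and> partition_on (N - S) (g ` K)) \<and> g \<in> K \<rightarrow>\<^sub>E Pow N \<and>
          inj_on g K \<and> card P = r \<and> (\<forall>B \<in> P \<union> g ` K. card B \<le> m) \<longleftrightarrow>
      (\<exists>S\<subseteq>N. P \<in> bounded_partitions m S r \<and> g \<in> labelled_bounded_partitions m (N - S) K)" for P g
    unfolding bounded_partitions_def labelled_bounded_partitions_def using funcset by (auto 0 3)
  show ?thesis
    using split_blocks regroup by auto
qed

lemma sum_Pow_by_card:
  fixes h :: "nat \<Rightarrow> 'b::comm_semiring_1"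
  assumes "finite N"
  shows "(\<Sum>S\<in>Pow N. h (card S)) = (\<Sum>i\<le>card N. of_nat (card N choose i) * h i)"
proof -
  have "(\<Sum>S\<in>Pow N. h (card S)) = (\<Sum>i\<le>card N. \<Sum>S\<in>{S \<in> Pow N. card S = i}. h (card S))"
    by (rule sum.group[symmetric]) (use assms card_mono in auto)
  also have "\<dots> = (\<Sum>i\<le>card N. \<Sum>S\<in>{S. S \<subseteq> N \<and> card S = i}. h i)"
    by (intro sum.cong) auto
  also have "\<dots> = (\<Sum>i\<le>card N. of_nat (card N choose i) * h i)"
    using n_subsets[OF assms] by simp
  finally show ?thesis .
qed

lemma card_mixed_bounded_partitions:
  assumes "finite N" "finite K"
  shows "card (mixed_bounded_partitions m N K r) =
           (\<Sum>i\<le>card N. (card N choose i) * stirling2_le m i r *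
                          stirling2_le m (card N - i) (card K) * fact (card K))"
proof -
  define h where "h i = stirling2_le m i r * stirling2_le m (card N - i) (card K) * fact (card K)"
    for i
  have finite_S: "finite S" if "S \<in> Pow N" for S
    using that assms(1) finite_subset by blast
  have "card (mixed_bounded_partitions m N K r) =
          (\<Sum>S\<in>Pow N. card (bounded_partitions m S r \<times> labelled_bounded_partitions m (N - S) K))"
    unfolding mixed_bounded_partitions_eq_UN
  proof (rule card_UN_disjoint)
    show "\<forall>S\<in>Pow N. finite (bounded_partitions m S r \<times> labelled_bounded_partitions m (N - S) K)"
      using finite_S assms by (simp add: finite_bounded_partitions finite_labelled_bounded_partitions)
    show "\<forall>S\<in>Pow N. \<forall>S'\<in>Pow N. S \<noteq> S' \<longrightarrow>
            (bounded_partitions m S r \<times> labelled_bounded_partitions m (N - S) K) \<inter>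
            (bounded_partitions m S' r \<times> labelled_bounded_partitions m (N - S') K) = {}"
      by (auto simp: bounded_partitions_def dest: partition_onD1)
  qed (use assms(1) in simp)
  also have "\<dots> = (\<Sum>S\<in>Pow N. h (card S))"
  proof (rule sum.cong[OF refl])
    fix S assume S: "S \<in> Pow N"
    then have "card (N - S) = card N - card S"
      using finite_S by (simp add: card_Diff_subset)
    then show "card (bounded_partitions m S r \<times> labelled_bounded_partitions m (N - S) K) =
                 h (card S)"
      using finite_S[OF S] assms
      by (simp add: card_cartesian_product card_labelled_bounded_partitions card_bounded_partitions h_def)
  qed
  also have "\<dots> = (\<Sum>i\<le>card N. (card N choose i) * h i)"
    using sum_Pow_by_card[OF assms(1), of h] by simp
  finally show ?thesis by (simp add: h_def mult.assoc)
qed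

theorem mainTheorem11:
  fixes n k r m :: nat
  assumes "n > 0" and "k > 0" and "r > 0"
  shows "mixed_stirling_le m n k r =
         (\<Sum>i=r..n. (n choose i) * stirling2_le m i r * stirling2_le m (n - i) (k - 1) * fact (k - 1))"
proof -
  have "mixed_stirling_le m n k r =
         (\<Sum>i\<le>n. (n choose i) * stirling2_le m i r * stirling2_le m (n - i) (k - 1) * fact (k - 1))"
    using card_mixed_bounded_partitions[of "{1..n}" "{2..k}" m r]
    by (simp add: mixed_stirling_le_eq_card)
  also have "\<dots> =
         (\<Sum>i=r..n. (n choose i) * stirling2_le m i r * stirling2_le m (n - i) (k - 1) * fact (k - 1))"
    by (rule sum.mono_neutral_right) (auto simp: stirling2_le_eq_0)
  finally show ?thesis .
qed

end
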